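(* Let $T_1$ be a quadtree in $\mathbb{R}^d$ and $T^*$ its extended quadtree. Let $C_1,C_2$ be two family related (possibly non-leaf) cells of $T^*$ with $|C_1|\le|C_2|$. Then the brand of $C_2$ is at most the brand of $C_1$.
   Context: A quadtree on an axis-aligned root hypercube $R\subset\mathbb{R}^d$ is a hierarchical decomposition in which every node has an associated axis-aligned hypercube (cell) and is either a leaf or has $2^d$ equal-sized children whose cells subdivide its cell. The size $|C|$ of a cell is its edge length. Two cells are neighbors if they are interior-disjoint and share (part of) a $(d-1)$-dimensional facet. Two cells $C_1,C_2$ with $|C_1|\le|C_2|$ are family related if the parent of $C_2$ is an ancestor of $C_1$ (they need not be neighbors). For an integer $j$, a cell $C$ is $2^j$-smooth if every leaf neighboring $C$ has size at most $2^j|C|$. Extended quadtree: the cells of $T_1$ get brand $1$. Recursively, for $j\ge1$, let $T^j$ be the quadtree formed by $\bigcup_{i\le j}T_i$, and let $T_{j+1}$ be the minimal set of cells obtained by splitting cells of $T^j$ such that every cell of $T_j$ is $2^j$-smooth in the resulting quadtree; the cells of $T_{j+1}$ get brand $j+1$. The extended quadtree is $T^*=T^{d+1}$. *)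

theory Defs
  imports "HOL-Analysis.Analysis"
begin

text \<open>A cell of a quadtree on the root hypercube with lower corner a and edge length s
  is encoded by its depth k and integer position p (one coordinate per axis, each
  below 2^k). The dimension d is CARD('d).\<close>

type_synonym 'd qcell = "nat \<times> ('d \<Rightarrow> nat)"

definition valid_cell :: "'d qcell \<Rightarrow> bool" where
  "valid_cell c \<longleftrightarrow> (\<forall>i. snd c i < 2 ^ fst c)"

definition root_cell :: "'d qcell" where
  "root_cell = (0, \<lambda>_. 0)"

definition parent :: "'d qcell \<Rightarrow> 'd qcell" where
  "parent c = (fst c - 1, \<lambda>i. snd c i div 2)"

definition children :: "'d qcell \<Rightarrow> 'd qcell set" where
  "children c = {(Suc (fst c), q) | q. \<forall>i. q i div 2 = snd c i}"

definition ancestor :: "'d qcell \<Rightarrow> 'd qcell \<Rightarrow> bool" where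
  "ancestor A C \<longleftrightarrow> fst A \<le> fst C \<and> (\<forall>i. snd C i div 2 ^ (fst C - fst A) = snd A i)"

definition cube :: "real^'d \<Rightarrow> real \<Rightarrow> 'd qcell \<Rightarrow> (real^'d) set" where
  "cube a s c = {x. \<forall>i. a$i + s * real (snd c i) / 2 ^ fst c \<le> x$i
                       \<and> x$i \<le> a$i + s * (real (snd c i) + 1) / 2 ^ fst c}"

definition csize :: "real \<Rightarrow> 'd qcell \<Rightarrow> real" where
  "csize s c = s / 2 ^ fst c"

definition quadtree :: "'d qcell set \<Rightarrow> bool" where
  "quadtree T \<longleftrightarrow> finite T \<and> root_cell \<in> T \<and> (\<forall>c\<in>T. valid_cell c)
     \<and> (\<forall>c\<in>T. c \<noteq> root_cell \<longrightarrow> parent c \<in> T)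
     \<and> (\<forall>c\<in>T. children c \<inter> T \<noteq> {} \<longrightarrow> children c \<subseteq> T)"

definition leaf :: "'d qcell set \<Rightarrow> 'd qcell \<Rightarrow> bool" where
  "leaf T c \<longleftrightarrow> c \<in> T \<and> children c \<inter> T = {}"

definition neighbors :: "real^'d \<Rightarrow> real \<Rightarrow> 'd qcell \<Rightarrow> 'd qcell \<Rightarrow> bool" where
  "neighbors a s c1 c2 \<longleftrightarrow>
     interior (cube a s c1) \<inter> interior (cube a s c2) = {}
     \<and> aff_dim (cube a s c1 \<inter> cube a s c2) = int CARD('d) - 1"

definition smooth :: "real^'d \<Rightarrow> real \<Rightarrow> 'd qcell set \<Rightarrow> 'd qcell \<Rightarrow> nat \<Rightarrow> bool" where
  "smooth a s Q C j \<longleftrightarrow>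
     (\<forall>L. leaf Q L \<and> neighbors a s L C \<longrightarrow> csize s L \<le> 2 ^ j * csize s C)"

text \<open>ext a s T1 j is T^j (with T^0 = {}), so T_j = T^j - T^(j-1).
  T^(j+1) is the least quadtree containing T^j in which every cell of T_j is
  2^j-smooth (T_(j+1) being the cells added by splitting).\<close>
fun ext :: "real^'d \<Rightarrow> real \<Rightarrow> 'd qcell set \<Rightarrow> nat \<Rightarrow> 'd qcell set" where
  "ext a s T1 0 = {}"
| "ext a s T1 (Suc 0) = T1"
| "ext a s T1 (Suc (Suc j)) =
     \<Inter> {Q. quadtree Q \<and> ext a s T1 (Suc j) \<subseteq> Q
            \<and> (\<forall>C \<in> ext a s T1 (Suc j) - ext a s T1 j. smooth a s Q C (Suc j))}"

definition extended_quadtree :: "real^'d \<Rightarrow> real \<Rightarrow> 'd qcell set \<Rightarrow> 'd qcell set" where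
  "extended_quadtree a s T1 = ext a s T1 (CARD('d) + 1)"

text \<open>Brand of a cell: the j with C in T_j, i.e. least j with C in T^j.\<close>
definition brand :: "real^'d \<Rightarrow> real \<Rightarrow> 'd qcell set \<Rightarrow> 'd qcell \<Rightarrow> nat" where
  "brand a s T1 C = (LEAST j. C \<in> ext a s T1 j)"

definition family_related :: "real \<Rightarrow> 'd qcell \<Rightarrow> 'd qcell \<Rightarrow> bool" where
  "family_related s C1 C2 \<longleftrightarrow> csize s C1 \<le> csize s C2 \<and> C2 \<noteq> root_cell
     \<and> ancestor (parent C2) C1"

end

theory Submission
  imports Defs
begin

text \<open>Every stage T^j is a quadtree: the uniform quadtree of sufficient depth satisfies all
  smoothness constraints, so the intersection defining T^(j+1) is over a nonempty family of
  quadtrees. If C2 is family related to C1 and C1 lies in T^j, then the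
  ancestor of C1 at the depth of C2 is a sibling of C2 in T^j, hence C2 lies in T^j too.\<close>

lemma quadtree_Inter:
  assumes "\<F> \<noteq> {}" and "\<And>Q. Q \<in> \<F> \<Longrightarrow> quadtree Q"
  shows "quadtree (\<Inter>\<F>)"
proof -
  obtain Q0 where "Q0 \<in> \<F>" using assms(1) by blast
  then have "finite (\<Inter>\<F>)"
    using assms(2) by (meson Inter_lower finite_subset quadtree_def)
  moreover have "children c \<subseteq> \<Inter>\<F>"
    if "c \<in> \<Inter>\<F>" and "children c \<inter> \<Inter>\<F> \<noteq> {}" for c
  proof (rule Inter_greatest)
    fix Q assume "Q \<in> \<F>"
    with that have "c \<in> Q" and "children c \<inter> Q \<noteq> {}" by blast+
    with \<open>Q \<in> \<F>\<close> assms(2) show "children c \<subseteq> Q" by (auto simp: quadtree_def)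
  qed
  ultimately show ?thesis
    using assms(1,2) unfolding quadtree_def by blast
qed

definition full_quadtree :: "nat \<Rightarrow> ('d::finite) qcell set" where
  "full_quadtree N = {c. fst c \<le> N \<and> valid_cell c}"

lemma valid_cell_depth_0: "valid_cell c \<Longrightarrow> fst c = 0 \<Longrightarrow> c = root_cell"
  by (cases c) (auto simp: valid_cell_def root_cell_def)

lemma finite_full_quadtree: "finite (full_quadtree N :: ('d::finite) qcell set)"
proof (rule finite_subset)
  show "(full_quadtree N :: 'd qcell set) \<subseteq> {..N} \<times> (UNIV \<rightarrow>\<^sub>E {..<(2::nat) ^ N})"
  proof
    fix c :: "'d qcell"
    assume c: "c \<in> full_quadtree N"
    then have "(2::nat) ^ fst c \<le> 2 ^ N" by (simp add: full_quadtree_def power_increasing)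
    with c show "c \<in> {..N} \<times> (UNIV \<rightarrow>\<^sub>E {..<2 ^ N})"
      by (cases c) (auto simp: full_quadtree_def valid_cell_def intro: less_le_trans)
  qed
  show "finite ({..N} \<times> (UNIV \<rightarrow>\<^sub>E {..<(2::nat) ^ N}) :: ('d qcell) set)"
    by (simp add: finite_PiE)
qed

lemma quadtree_full_quadtree: "quadtree (full_quadtree N :: ('d::finite) qcell set)"
  unfolding quadtree_def
proof (intro conjI ballI impI)
  fix c :: "'d qcell"
  assume c: "c \<in> full_quadtree N" "c \<noteq> root_cell"
  then have "fst c \<noteq> 0" using valid_cell_depth_0 unfolding full_quadtree_def by blast
  then obtain m where m: "fst c = Suc m" using not0_implies_Suc by blast
  with c(1) have "\<forall>i. snd c i div 2 < 2 ^ m"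
    by (auto simp: full_quadtree_def valid_cell_def less_mult_imp_div_less mult.commute)
  with c(1) m show "parent c \<in> full_quadtree N"
    by (simp add: full_quadtree_def parent_def valid_cell_def)
next
  fix c :: "'d qcell"
  assume c: "c \<in> full_quadtree N" and "children c \<inter> full_quadtree N \<noteq> {}"
  then have "Suc (fst c) \<le> N" by (auto simp: children_def full_quadtree_def)
  moreover have "q i < 2 ^ Suc (fst c)" if "\<forall>i. q i div 2 = snd c i" for q i
  proof -
    have "q i div 2 < 2 ^ fst c" using c that by (auto simp: full_quadtree_def valid_cell_def)
    then show ?thesis by (simp add: div_less_iff_less_mult mult.commute)
  qed
  ultimately show "children c \<subseteq> full_quadtree N"
    by (auto simp: children_def full_quadtree_def valid_cell_def)
qed (use finite_full_quadtree[unfolded full_quadtree_def] in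
      \<open>auto simp: full_quadtree_def root_cell_def valid_cell_def\<close>)

lemma leaf_full_quadtree_depth:
  assumes "leaf (full_quadtree N :: ('d::finite) qcell set) L"
  shows "fst L = N"
proof (rule ccontr)
  assume "fst L \<noteq> N"
  with assms have "fst L < N" "\<forall>i. snd L i < 2 ^ fst L"
    by (auto simp: leaf_def full_quadtree_def valid_cell_def)
  then have "(Suc (fst L), \<lambda>i. 2 * snd L i) \<in> children L \<inter> full_quadtree N"
    by (auto simp: children_def full_quadtree_def valid_cell_def)
  with assms show False by (auto simp: leaf_def)
qed

lemma smooth_full_quadtree:
  assumes "s > 0" and "fst C \<le> N"
  shows "smooth a s (full_quadtree N) C j"
  unfolding smooth_def
proof (intro allI impI)
  fix L assume "leaf (full_quadtree N) L \<and> neighbors a s L C"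
  then have "fst L = N" using leaf_full_quadtree_depth by blast
  have "s / 2 ^ N \<le> s / 2 ^ fst C"
    using assms by (simp add: frac_le power_increasing)
  also have "\<dots> \<le> 2 ^ j * (s / 2 ^ fst C)"
    using assms(1) by (simp add: divide_right_mono)
  finally show "csize s L \<le> 2 ^ j * csize s C"
    using \<open>fst L = N\<close> by (simp add: csize_def)
qed

lemma quadtree_ext:
  assumes "s > 0" and "quadtree T1"
  shows "quadtree (ext a s T1 (Suc n))"
proof (induction n)
  case 0
  then show ?case using assms(2) by simp
next
  case (Suc n)
  let ?S = "ext a s T1 (Suc n)"
  define N where "N = Max (fst ` ?S)"
  have "finite ?S" using Suc.IH by (simp add: quadtree_def)
  then have depth: "fst c \<le> N" if "c \<in> ?S" for c
    using that by (simp add: N_def)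
  have "?S \<subseteq> full_quadtree N"
    using Suc.IH depth by (auto simp: full_quadtree_def quadtree_def)
  moreover have "\<forall>C \<in> ?S - ext a s T1 n. smooth a s (full_quadtree N) C (Suc n)"
    using depth smooth_full_quadtree[OF assms(1)] by blast
  ultimately have "full_quadtree N \<in> {Q. quadtree Q \<and> ?S \<subseteq> Q
          \<and> (\<forall>C \<in> ?S - ext a s T1 n. smooth a s Q C (Suc n))}"
    using quadtree_full_quadtree by blast
  then show ?case
    by (simp only: ext.simps) (rule quadtree_Inter; blast)
qed

lemma quadtree_ancestor_mem:
  assumes "quadtree T" and "C \<in> T" and "ancestor A C"
  shows "A \<in> T"
proof -
  define t where "t = fst C - fst A"
  then have t: "fst C = fst A + t" using assms(3) by (simp add: ancestor_def)
  have "(k, \<lambda>i. snd C i div 2 ^ t) \<in> T" if "C \<in> T" "fst C = k + t" for C k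
    using that
  proof (induction t arbitrary: C)
    case 0
    then show ?case by (cases C) simp
  next
    case (Suc t)
    then have "C \<noteq> root_cell" by (auto simp: root_cell_def)
    with Suc.prems assms(1) have "parent C \<in> T" by (auto simp: quadtree_def)
    with Suc.prems have "(k, \<lambda>i. snd (parent C) i div 2 ^ t) \<in> T"
      by (intro Suc.IH) (auto simp: parent_def)
    then show ?case by (simp add: parent_def div_mult2_eq)
  qed
  moreover have "A = (fst A, \<lambda>i. snd C i div 2 ^ t)"
    using assms(3) t_def by (cases A) (auto simp: ancestor_def)
  ultimately show ?thesis using assms(2) t by metis
qed

lemma csize_le_iff:
  assumes "s > 0"
  shows "csize s C1 \<le> csize s C2 \<longleftrightarrow> fst C2 \<le> fst C1"
  using assms by (simp add: csize_def field_simps)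

lemma quadtree_family_related_mem:
  assumes "quadtree T" and "C1 \<in> T" and "valid_cell C2" and "s > 0"
    and "family_related s C1 C2"
  shows "C2 \<in> T"
proof -
  have "ancestor (parent C2) C1" and "fst C2 \<le> fst C1"
    using assms(4,5) by (auto simp: family_related_def csize_le_iff)
  moreover have "fst C2 \<noteq> 0"
    using assms(3,5) valid_cell_depth_0 unfolding family_related_def by blast
  then obtain m where m: "fst C2 = Suc m" using not0_implies_Suc by blast
  ultimately have anc: "\<forall>i. snd C1 i div 2 ^ (fst C1 - m) = snd C2 i div 2" and "m < fst C1"
    by (auto simp: ancestor_def parent_def)
  define D :: "'a qcell" where "D = (Suc m, \<lambda>i. snd C1 i div 2 ^ (fst C1 - Suc m))"
  have "D \<in> T"
    using \<open>m < fst C1\<close>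
    by (intro quadtree_ancestor_mem[OF assms(1,2)]) (simp add: D_def ancestor_def)
  moreover have "D \<in> children (parent C2)"
  proof -
    have "fst C1 - m = Suc (fst C1 - Suc m)" using \<open>m < fst C1\<close> by simp
    then have "snd C1 i div 2 ^ (fst C1 - Suc m) div 2 = snd C2 i div 2" for i
      using anc by (metis div_mult2_eq power_Suc2)
    then show ?thesis using m by (simp add: D_def children_def parent_def)
  qed
  moreover have "parent C2 \<in> T"
    using quadtree_ancestor_mem assms(1,2) \<open>ancestor (parent C2) C1\<close> by blast
  ultimately have "children (parent C2) \<subseteq> T"
    using assms(1) unfolding quadtree_def by blast
  moreover have "C2 \<in> children (parent C2)"
    using m by (cases C2) (auto simp: children_def parent_def)
  ultimately show ?thesis by blast
qed

theorem lemma15: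
  fixes a :: "real^'d" and s :: real and T1 :: "'d qcell set" and C1 C2 :: "'d qcell"
  assumes "s > 0"
    and "quadtree T1"
    and "C1 \<in> extended_quadtree a s T1"
    and "C2 \<in> extended_quadtree a s T1"
    and "family_related s C1 C2"
  shows "brand a s T1 C2 \<le> brand a s T1 C1"
proof -
  have C1_stage: "C1 \<in> ext a s T1 (brand a s T1 C1)"
    using assms(3) unfolding brand_def extended_quadtree_def by (rule LeastI)
  then obtain n where n: "brand a s T1 C1 = Suc n"
    by (cases "brand a s T1 C1") auto
  have "valid_cell C2"
    using quadtree_ext[OF assms(1,2)] assms(4) by (auto simp: extended_quadtree_def quadtree_def)
  then have "C2 \<in> ext a s T1 (Suc n)"
    using quadtree_family_related_mem[OF quadtree_ext[OF assms(1,2)]] C1_stage n assms(1,5)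
    by simp
  then have "brand a s T1 C2 \<le> Suc n"
    unfolding brand_def by (rule Least_le)
  with n show ?thesis by simp
qed

end
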